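(* Let $w\in S_n$. Then $|R(w)|=|B(w)|\cdot|C(w)|$ if and only if $|B(w)|=1$ or $|C(w)|=1$.
   Context: $S_n$ is generated by the adjacent transpositions $s_1,\dots,s_{n-1}$. A reduced word for $w$ is a word $i_1\cdots i_k$ with $w=s_{i_1}\cdots s_{i_k}$ and $k$ minimal; $R(w)$ is the set of reduced words. A braid move replaces a factor (consecutive letters) $i(i+1)i$ by $(i+1)i(i+1)$ or vice versa; a commutation move replaces a factor $ij$ with $|i-j|>1$ by $ji$. $B(w)$ (resp. $C(w)$) is the set of equivalence classes of $R(w)$ under sequences of braid moves (resp. commutation moves). *)

theory Defs
  imports "HOL-Combinatorics.Permutations"
begin

text \<open>Permutations in S_n are bijections of {1..n} (identity outside).\<close>

definition adj_transp :: "nat \<Rightarrow> nat \<Rightarrow> nat" where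
  "adj_transp i = transpose i (Suc i)"

definition word_prod :: "nat list \<Rightarrow> nat \<Rightarrow> nat" where
  "word_prod ws = foldr (\<lambda>i f. adj_transp i \<circ> f) ws id"

definition is_word :: "nat \<Rightarrow> nat list \<Rightarrow> bool" where
  "is_word n ws \<longleftrightarrow> set ws \<subseteq> {1..<n}"

definition reduced_words :: "nat \<Rightarrow> (nat \<Rightarrow> nat) \<Rightarrow> nat list set" where
  "reduced_words n w = {ws. is_word n ws \<and> word_prod ws = w \<and>
     (\<forall>vs. is_word n vs \<and> word_prod vs = w \<longrightarrow> length ws \<le> length vs)}"

definition braid_move :: "nat list \<Rightarrow> nat list \<Rightarrow> bool" where
  "braid_move xs ys \<longleftrightarrow> (\<exists>u v i.
     (xs = u @ [i, Suc i, i] @ v \<and> ys = u @ [Suc i, i, Suc i] @ v) \<or>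
     (xs = u @ [Suc i, i, Suc i] @ v \<and> ys = u @ [i, Suc i, i] @ v))"

definition comm_move :: "nat list \<Rightarrow> nat list \<Rightarrow> bool" where
  "comm_move xs ys \<longleftrightarrow> (\<exists>u v i j. (Suc i < j \<or> Suc j < i) \<and>
     xs = u @ [i, j] @ v \<and> ys = u @ [j, i] @ v)"

definition move_classes :: "(nat list \<Rightarrow> nat list \<Rightarrow> bool) \<Rightarrow> nat list set \<Rightarrow> nat list set set" where
  "move_classes mv R = R // {(x, y). x \<in> R \<and> y \<in> R \<and> mv\<^sup>*\<^sup>* x y}"

definition braid_classes :: "nat \<Rightarrow> (nat \<Rightarrow> nat) \<Rightarrow> nat list set set" where
  "braid_classes n w = move_classes braid_move (reduced_words n w)"

definition comm_classes :: "nat \<Rightarrow> (nat \<Rightarrow> nat) \<Rightarrow> nat list set set" where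
  "comm_classes n w = move_classes comm_move (reduced_words n w)"

end

theory Submission
  imports Defs
begin

text \<open>Attach to a word i_1 ... i_k the sequence of its inversions: the m-th entry is the
  pair of points exchanged by s_{i_1} ... s_{i_{m-1}} s_{i_m} s_{i_{m-1}} ... s_{i_1}.
  For a reduced word these pairs are distinct.  A braid move reverses the order of three
  pairwise overlapping inversions, a commutation move that of two disjoint ones.  Hence
  braid moves preserve the relative order of disjoint inversions and commutation moves that
  of overlapping ones, so two words that are both braid and commutation equivalent have the
  same inversion sequence and coincide.  A braid class and a commutation class therefore
  meet in at most one word, and |R(w)| = |B(w)| |C(w)| holds iff every braid class meets
  every commutation class.

  This is clear if B(w) or C(w) is a singleton.  Otherwise every reduced word admits both a
  braid and a commutation move, and sliding the commuting pair towards the braid factor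
  yields a reduced word containing c a b a or a b a c with c commuting with a.  Then the
  braid class of a c b a (resp. a b c a) cannot meet the commutation class of c b a b
  (resp. b a b c): a common word would order three of its inversions cyclically.\<close>

section \<open>Letters, words and moves\<close>

definition distant :: "nat \<Rightarrow> nat \<Rightarrow> bool" where
  "distant i j \<longleftrightarrow> Suc i < j \<or> Suc j < i"

definition adjacent :: "nat \<Rightarrow> nat \<Rightarrow> bool" where
  "adjacent i j \<longleftrightarrow> j = Suc i \<or> i = Suc j"

lemma distant_sym: "distant i j \<Longrightarrow> distant j i"
  by (auto simp: distant_def)

lemma adjacent_sym: "adjacent i j \<Longrightarrow> adjacent j i"
  by (auto simp: adjacent_def)

lemma not_distant_and_adjacent: "distant i j \<Longrightarrow> adjacent i j \<Longrightarrow> False"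
  by (auto simp: distant_def adjacent_def)

lemma adjacent_if_not_distant: "\<not> distant i j \<Longrightarrow> i \<noteq> j \<Longrightarrow> adjacent i j"
  by (auto simp: distant_def adjacent_def)

lemma common_neighbour_of_distant:
  "adjacent a e \<Longrightarrow> adjacent b e \<Longrightarrow> distant a b \<Longrightarrow> adjacent e f \<Longrightarrow> f = a \<or> f = b"
  by (auto simp: distant_def adjacent_def)

lemma braid_move_iff:
  "braid_move u v \<longleftrightarrow> (\<exists>x i j y. adjacent i j \<and> u = x @ [i, j, i] @ y \<and> v = x @ [j, i, j] @ y)"
  unfolding braid_move_def adjacent_def by blast

lemma comm_move_iff:
  "comm_move u v \<longleftrightarrow> (\<exists>x i j y. distant i j \<and> u = x @ [i, j] @ y \<and> v = x @ [j, i] @ y)"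
  unfolding comm_move_def distant_def by blast

lemma braid_moveI: "adjacent i j \<Longrightarrow> braid_move (x @ [i, j, i] @ y) (x @ [j, i, j] @ y)"
  unfolding braid_move_iff by blast

lemma braid_move_sym: "braid_move u v \<Longrightarrow> braid_move v u"
  unfolding braid_move_def by blast

lemma comm_move_sym: "comm_move u v \<Longrightarrow> comm_move v u"
  unfolding comm_move_def by blast

abbreviation adj_pair :: "nat \<Rightarrow> nat set" where
  "adj_pair i \<equiv> {i, Suc i}"

lemma word_prod_Nil [simp]: "word_prod [] = id"
  by (simp add: word_prod_def)

lemma word_prod_Cons [simp]: "word_prod (i # ws) = adj_transp i \<circ> word_prod ws"
  by (simp add: word_prod_def)

lemma word_prod_append [simp]: "word_prod (xs @ ys) = word_prod xs \<circ> word_prod ys"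
  by (induction xs) auto

lemma bij_adj_transp [simp]: "bij (adj_transp i)"
  by (simp add: adj_transp_def)

lemma inj_adj_transp [simp]: "inj (adj_transp i)"
  by (simp add: adj_transp_def)

lemma adj_transp_adj_transp [simp]: "adj_transp i (adj_transp i x) = x"
  by (simp add: adj_transp_def)

lemma bij_word_prod [simp]: "bij (word_prod ws)"
proof (induction ws)
  case (Cons i ws)
  then show ?case by (simp only: word_prod_Cons) (rule bij_comp[OF _ bij_adj_transp])
qed (simp only: word_prod_Nil bij_id)

lemma inj_word_prod [simp]: "inj (word_prod ws)"
  by (simp add: bij_is_inj)

lemma word_prod_comm: "distant i j \<Longrightarrow> word_prod [i, j] = word_prod [j, i]"
  by (auto simp: distant_def adj_transp_def transpose_def fun_eq_iff)

lemma word_prod_braid: "adjacent i j \<Longrightarrow> word_prod [i, j, i] = word_prod [j, i, j]"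
  by (auto simp: adjacent_def adj_transp_def transpose_def fun_eq_iff)

lemma adj_transp_image_distant: "distant i j \<Longrightarrow> adj_transp i ` adj_pair j = adj_pair j"
  by (auto simp: distant_def adj_transp_def transpose_def)

lemma adj_transp_image_self [simp]: "adj_transp i ` adj_pair i = adj_pair i"
  by (auto simp: adj_transp_def transpose_def)

lemma adj_transp_image_adjacent: "adjacent i j \<Longrightarrow> adj_transp i ` adj_transp j ` adj_pair i = adj_pair j"
  by (auto simp: adjacent_def adj_transp_def transpose_def)

lemma adj_transp_image_comm:
  assumes "distant i j"
  shows "adj_transp i ` adj_transp j ` s = adj_transp j ` adj_transp i ` s"
proof -
  have "adj_transp i \<circ> adj_transp j = adj_transp j \<circ> adj_transp i"
    using word_prod_comm[OF assms] by simp
  then show ?thesis by (simp only: image_comp)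
qed

lemma adj_transp_image_braid:
  assumes "adjacent i j"
  shows "adj_transp j ` adj_transp i ` adj_transp j ` s = adj_transp i ` adj_transp j ` adj_transp i ` s"
proof -
  have "adj_transp j \<circ> (adj_transp i \<circ> adj_transp j) = adj_transp i \<circ> (adj_transp j \<circ> adj_transp i)"
    using word_prod_braid[OF assms] by simp
  then show ?thesis by (simp only: image_comp)
qed

lemma adj_pair_inject: "adj_pair i = adj_pair j \<Longrightarrow> i = j"
  by (auto simp: doubleton_eq_iff)

section \<open>Reduced words\<close>

lemma reduced_words_Cons_tail:
  assumes "i # u \<in> reduced_words n w"
  shows "u \<in> reduced_words n (word_prod u)"
proof -
  from assms have i: "i \<in> {1..<n}" and u: "is_word n u"
    and min: "\<And>vs. is_word n vs \<Longrightarrow> word_prod vs = w \<Longrightarrow> length (i # u) \<le> length vs"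
    and w: "word_prod (i # u) = w"
    by (auto simp: reduced_words_def is_word_def)
  have "length u \<le> length vs" if "is_word n vs" "word_prod vs = word_prod u" for vs
    using min[of "i # vs"] that i w by (auto simp: is_word_def)
  with u show ?thesis by (auto simp: reduced_words_def)
qed

lemma reduced_words_replace_factor:
  assumes "x @ m @ y \<in> reduced_words n w"
    and "word_prod m' = word_prod m" "length m' = length m" "set m' \<subseteq> set m"
  shows "x @ m' @ y \<in> reduced_words n w"
  using assms by (auto simp: reduced_words_def is_word_def)

lemma reduced_words_braid_move:
  assumes "braid_move u v" "u \<in> reduced_words n w"
  shows "v \<in> reduced_words n w"
proof -
  obtain x i j y where ij: "adjacent i j" and uv: "u = x @ [i, j, i] @ y" "v = x @ [j, i, j] @ y"
    using assms(1) unfolding braid_move_iff by blast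
  show ?thesis
    unfolding uv(2)
    by (rule reduced_words_replace_factor[OF _ word_prod_braid[OF adjacent_sym[OF ij]]])
      (use assms(2) uv(1) in auto)
qed

lemma reduced_words_comm_move:
  assumes "comm_move u v" "u \<in> reduced_words n w"
  shows "v \<in> reduced_words n w"
proof -
  obtain x i j y where ij: "distant i j" and uv: "u = x @ [i, j] @ y" "v = x @ [j, i] @ y"
    using assms(1) unfolding comm_move_iff by blast
  show ?thesis
    unfolding uv(2)
    by (rule reduced_words_replace_factor[OF _ word_prod_comm[OF distant_sym[OF ij]]])
      (use assms(2) uv(1) in auto)
qed

lemma reduced_words_no_square: "x @ [i, i] @ y \<notin> reduced_words n w"
proof
  assume red: "x @ [i, i] @ y \<in> reduced_words n w"
  have "word_prod (x @ y) = word_prod (x @ [i, i] @ y)"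
    by (simp add: fun_eq_iff)
  moreover have "is_word n (x @ y)"
    using red by (auto simp: reduced_words_def is_word_def)
  ultimately have "length (x @ [i, i] @ y) \<le> length (x @ y)"
    using red unfolding reduced_words_def by blast
  then show False by simp
qed

lemma transposition_word:
  assumes "1 \<le> a" "a < b" "b \<le> n"
  shows "\<exists>ws. is_word n ws \<and> word_prod ws = transpose a b"
  using assms
proof (induction b)
  case (Suc b)
  show ?case
  proof (cases "a = b")
    case True
    with Suc.prems show ?thesis
      by (intro exI[of _ "[a]"]) (auto simp: is_word_def adj_transp_def)
  next
    case False
    with Suc obtain ws where ws: "is_word n ws" "word_prod ws = transpose a b" by auto
    have "adj_transp b \<circ> transpose a b \<circ> adj_transp b = transpose a (Suc b)"
      using False Suc.prems by (auto simp: adj_transp_def transpose_def fun_eq_iff)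
    with ws False Suc.prems show ?thesis
      by (intro exI[of _ "[b] @ ws @ [b]"]) (auto simp: is_word_def comp_assoc)
  qed
qed simp

lemma permutation_word:
  assumes "w permutes {1..n}"
  shows "\<exists>ws. is_word n ws \<and> word_prod ws = w"
  using assms finite_atLeastAtMost[of 1 n]
proof (induction rule: permutes_induct)
  case id
  show ?case by (intro exI[of _ "[]"]) (simp add: is_word_def)
next
  case (swap a b p)
  obtain ws where ws: "is_word n ws" "word_prod ws = p"
    using swap.IH by blast
  have "transpose a b = transpose (min a b) (max a b)"
    by (cases "a \<le> b") (auto simp: transpose_commute)
  moreover have "1 \<le> min a b" "min a b < max a b" "max a b \<le> n"
    using swap.hyps by auto
  then obtain vs where "is_word n vs" "word_prod vs = transpose (min a b) (max a b)"
    using transposition_word by blast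
  ultimately show ?case
    using ws by (intro exI[of _ "vs @ ws"]) (auto simp: is_word_def)
qed

lemma reduced_words_nonempty:
  assumes "w permutes {1..n}"
  shows "reduced_words n w \<noteq> {}"
proof -
  let ?len = "\<lambda>l. \<exists>ws. is_word n ws \<and> word_prod ws = w \<and> length ws = l"
  obtain ws where "is_word n ws" "word_prod ws = w" "length ws = (LEAST l. ?len l)"
    using LeastI_ex[of ?len] permutation_word[OF assms] by blast
  then have "ws \<in> reduced_words n w"
    by (auto simp: reduced_words_def intro: Least_le)
  then show ?thesis by blast
qed

lemma finite_reduced_words: "finite (reduced_words n w)"
proof (cases "reduced_words n w = {}")
  case False
  then obtain u where u: "u \<in> reduced_words n w" by blast
  have "reduced_words n w \<subseteq> {ws. set ws \<subseteq> {1..<n} \<and> length ws = length u}"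
    using u by (auto simp: reduced_words_def is_word_def intro: antisym)
  then show ?thesis
    by (rule finite_subset) (simp add: finite_lists_length_eq)
qed simp

section \<open>Inversion sequences\<close>

fun inversions :: "nat list \<Rightarrow> nat set list" where
  "inversions [] = []"
| "inversions (i # u) = adj_pair i # map ((`) (adj_transp i)) (inversions u)"

lemma inversions_append:
  "inversions (xs @ ys) = inversions xs @ map ((`) (word_prod xs)) (inversions ys)"
  by (induction xs) (auto simp: image_comp o_def)

lemma inversions_factor:
  "inversions (x @ m @ y) =
     inversions x @ map ((`) (word_prod x)) (inversions m) @ map ((`) (word_prod (x @ m))) (inversions y)"
  by (simp add: inversions_append image_comp o_def)

lemma inj_image: "inj f \<Longrightarrow> inj ((`) f)"
  by (simp add: inj_on_def inj_image_eq_iff)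

lemma inversions_inject: "inversions u = inversions v \<Longrightarrow> u = v"
proof (induction u arbitrary: v)
  case Nil
  then show ?case by (cases v) auto
next
  case (Cons i u)
  then obtain j v' where v: "v = j # v'" and "adj_pair i = adj_pair j"
    by (cases v) auto
  then have ij: "i = j" using adj_pair_inject by blast
  with Cons.prems v have "map ((`) (adj_transp i)) (inversions u) = map ((`) (adj_transp i)) (inversions v')"
    by simp
  then have "inversions u = inversions v'"
    using inj_map_eq_map[OF inj_image[OF inj_adj_transp]] by blast
  with Cons.IH ij v show ?case by simp
qed

lemma in_set_inversions:
  "t \<in> set (inversions u) \<Longrightarrow> \<exists>x i y. u = x @ [i] @ y \<and> t = word_prod x ` adj_pair i"
proof (induction u arbitrary: t)
  case (Cons j u)
  show ?case
  proof (cases "t = adj_pair j")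
    case True
    then show ?thesis by (intro exI[of _ "[]"]) auto
  next
    case False
    with Cons.prems obtain t' where "t' \<in> set (inversions u)" "t = adj_transp j ` t'" by auto
    with Cons.IH obtain x i y where "u = x @ [i] @ y" "t = adj_transp j ` word_prod x ` adj_pair i"
      by blast
    then show ?thesis by (intro exI[of _ "j # x"]) (auto simp: image_comp)
  qed
qed simp

lemma adj_transp_conj_cancel:
  assumes "bij X" "X ` adj_pair j = adj_pair i"
  shows "adj_transp i \<circ> X \<circ> adj_transp j = X"
proof
  fix z
  have inj: "inj X" using assms(1) bij_is_inj by blast
  then have "X j \<noteq> X (Suc j)" by (simp add: inj_eq)
  with assms(2) have ends: "(X j = i \<and> X (Suc j) = Suc i) \<or> (X j = Suc i \<and> X (Suc j) = i)"
    by (auto simp: doubleton_eq_iff)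
  show "(adj_transp i \<circ> X \<circ> adj_transp j) z = X z"
  proof (cases "z = j \<or> z = Suc j")
    case True
    with ends show ?thesis by (auto simp: adj_transp_def)
  next
    case False
    then have "X z \<noteq> X j" "X z \<noteq> X (Suc j)" using inj by (auto simp: inj_eq)
    with ends False show ?thesis by (auto simp: adj_transp_def)
  qed
qed

text \<open>Were the first inversion repeated, the letter i and the letter j creating the
  repetition could both be deleted.\<close>
lemma adj_pair_notin_inversions_tail:
  assumes "i # u \<in> reduced_words n w"
  shows "adj_pair i \<notin> set (inversions u)"
proof
  assume "adj_pair i \<in> set (inversions u)"
  then obtain x j y where u: "u = x @ [j] @ y" and "word_prod x ` adj_pair j = adj_pair i"
    using in_set_inversions by blast
  then have "adj_transp i \<circ> word_prod x \<circ> adj_transp j = word_prod x"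
    by (intro adj_transp_conj_cancel) simp_all
  moreover have "word_prod (i # u) = (adj_transp i \<circ> word_prod x \<circ> adj_transp j) \<circ> word_prod y"
    by (simp add: u comp_assoc)
  ultimately have "word_prod (x @ y) = word_prod (i # u)"
    by simp
  moreover have "is_word n (x @ y)"
    using assms u by (auto simp: reduced_words_def is_word_def)
  ultimately have "length (i # u) \<le> length (x @ y)"
    using assms unfolding reduced_words_def by blast
  with u show False by simp
qed

lemma distinct_inversions: "u \<in> reduced_words n w \<Longrightarrow> distinct (inversions u)"
proof (induction u arbitrary: w)
  case (Cons i u)
  have "distinct (inversions u)"
    using Cons.IH[OF reduced_words_Cons_tail[OF Cons.prems]] .
  then have "distinct (map ((`) (adj_transp i)) (inversions u))"
    by (simp add: distinct_map inj_on_subset[OF inj_image[OF inj_adj_transp]])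
  moreover have "adj_pair i \<notin> set (map ((`) (adj_transp i)) (inversions u))"
  proof
    assume "adj_pair i \<in> set (map ((`) (adj_transp i)) (inversions u))"
    then obtain t where t: "t \<in> set (inversions u)" "adj_transp i ` t = adj_pair i" by auto
    have "t = adj_transp i ` adj_transp i ` t" by (simp add: image_comp o_def)
    also have "\<dots> = adj_pair i" by (simp only: t(2) adj_transp_image_self)
    finally show False
      using t(1) adj_pair_notin_inversions_tail[OF Cons.prems] by simp
  qed
  ultimately show ?case by simp
qed simp

fun before_pairs :: "'a list \<Rightarrow> ('a \<times> 'a) set" where
  "before_pairs [] = {}"
| "before_pairs (x # xs) = Pair x ` set xs \<union> before_pairs xs"

lemma before_pairs_append:
  "before_pairs (xs @ ys) = before_pairs xs \<union> before_pairs ys \<union> set xs \<times> set ys"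
  by (induction xs) auto

lemma before_pairs_subset: "before_pairs xs \<subseteq> set xs \<times> set xs"
  by (induction xs) auto

lemma before_pairs_map: "before_pairs (map f xs) = map_prod f f ` before_pairs xs"
  by (induction xs) auto

lemma before_pairs_4:
  "(a1, a2) \<in> before_pairs [a1, a2, a3, a4]" "(a1, a3) \<in> before_pairs [a1, a2, a3, a4]"
  "(a2, a4) \<in> before_pairs [a1, a2, a3, a4]" "(a3, a4) \<in> before_pairs [a1, a2, a3, a4]"
  by auto

lemma before_pairs_Cons_tail:
  "x \<notin> set xs \<Longrightarrow> before_pairs xs = {p \<in> before_pairs (x # xs). fst p \<noteq> x}"
  using before_pairs_subset[of xs] by auto

lemma before_pairs_no_3cycle:
  "distinct xs \<Longrightarrow> (a, b) \<in> before_pairs xs \<Longrightarrow> (b, c) \<in> before_pairs xs \<Longrightarrow> (c, a) \<notin> before_pairs xs"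
proof (induction xs)
  case (Cons x xs)
  have x: "x \<notin> set xs" using Cons.prems(1) by simp
  then have not_last: "(p, x) \<notin> before_pairs (x # xs)" for p
    using before_pairs_subset[of xs] by auto
  have tail: "(p, q) \<in> before_pairs xs" if "(p, q) \<in> before_pairs (x # xs)" "p \<noteq> x" for p q
    using that by auto
  show ?case
  proof
    assume ca: "(c, a) \<in> before_pairs (x # xs)"
    have "a \<noteq> x" "b \<noteq> x" "c \<noteq> x"
      using not_last ca Cons.prems(2,3) by metis+
    with Cons.prems(2,3) ca tail have "(a, b) \<in> before_pairs xs" "(b, c) \<in> before_pairs xs"
        "(c, a) \<in> before_pairs xs"
      by blast+
    with Cons.IH Cons.prems(1) show False by simp
  qed
qed simp

lemma list_eq_if_before_pairs_eq:
  "distinct xs \<Longrightarrow> distinct ys \<Longrightarrow> set xs = set ys \<Longrightarrow> before_pairs xs = before_pairs ys \<Longrightarrow> xs = ys"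
proof (induction xs arbitrary: ys)
  case (Cons x xs)
  obtain y ys' where ys: "ys = y # ys'" using Cons.prems(3) by (cases ys) auto
  have "x = y"
  proof (rule ccontr)
    assume "x \<noteq> y"
    with Cons.prems(3) ys have "x \<in> set ys'" by (metis list.set_intros(1) set_ConsD)
    with ys Cons.prems(4) have "(y, x) \<in> before_pairs (x # xs)" by simp
    moreover have "x \<notin> set xs" using Cons.prems(1) by simp
    ultimately show False using before_pairs_subset[of xs] by auto
  qed
  have x: "x \<notin> set xs" "x \<notin> set ys'" using Cons.prems(1,2) ys \<open>x = y\<close> by auto
  with Cons.prems(3) ys \<open>x = y\<close> have "set xs = set ys'" by auto
  moreover have "before_pairs xs = before_pairs ys'"
    using Cons.prems(4) ys \<open>x = y\<close>
    by (simp only: before_pairs_Cons_tail[OF x(1)] before_pairs_Cons_tail[OF x(2)])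
  ultimately show ?case using Cons.IH Cons.prems(1,2) ys \<open>x = y\<close> by simp
qed simp

section \<open>Moves and the order of inversions\<close>

definition disjoint_pairs :: "('a set \<times> 'a set) set" where
  "disjoint_pairs = {(s, t). s \<inter> t = {}}"

lemma image_in_disjoint_pairs_iff:
  "inj f \<Longrightarrow> (f ` s, f ` t) \<in> disjoint_pairs \<longleftrightarrow> (s, t) \<in> disjoint_pairs"
  by (simp add: disjoint_pairs_def image_Int[symmetric])

lemma adj_pairs_in_disjoint_pairs: "distant i j \<Longrightarrow> (adj_pair i, adj_pair j) \<in> disjoint_pairs"
  by (auto simp: distant_def disjoint_pairs_def)

lemma adj_pairs_notin_disjoint_pairs: "adjacent i j \<Longrightarrow> (adj_pair i, adj_pair j) \<notin> disjoint_pairs"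
  by (auto simp: adjacent_def disjoint_pairs_def)

abbreviation inversion_order :: "nat list \<Rightarrow> (nat set \<times> nat set) set" where
  "inversion_order u \<equiv> before_pairs (inversions u)"

lemma inversions_replace_factor:
  assumes "word_prod m' = word_prod m"
    and "set (inversions m') = set (inversions m)"
    and "inversion_order m' \<inter> P = inversion_order m \<inter> P"
    and "\<And>s t. (word_prod x ` s, word_prod x ` t) \<in> P \<longleftrightarrow> (s, t) \<in> P"
  shows "set (inversions (x @ m' @ y)) = set (inversions (x @ m @ y))"
    and "inversion_order (x @ m' @ y) \<inter> P = inversion_order (x @ m @ y) \<inter> P"
proof -
  let ?f = "(`) (word_prod x)"
  have "before_pairs (map ?f L) \<inter> P = map_prod ?f ?f ` (before_pairs L \<inter> P)" for L
    using assms(4) by (auto simp: before_pairs_map)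
  then have "before_pairs (map ?f (inversions m')) \<inter> P = before_pairs (map ?f (inversions m)) \<inter> P"
    using assms(3) by simp
  with assms(1,2) show "inversion_order (x @ m' @ y) \<inter> P = inversion_order (x @ m @ y) \<inter> P"
    by (simp add: inversions_factor before_pairs_append Int_Un_distrib2)
  show "set (inversions (x @ m' @ y)) = set (inversions (x @ m @ y))"
    using assms(1,2) by (simp add: inversions_factor)
qed

lemma inversions_braid_factors:
  "inversions [i, Suc i, i] = [{i, Suc i}, {i, Suc (Suc i)}, {Suc i, Suc (Suc i)}]"
  "inversions [Suc i, i, Suc i] = [{Suc i, Suc (Suc i)}, {i, Suc (Suc i)}, {i, Suc i}]"
  by (auto simp: adj_transp_def)

lemma braid_factor_inversions:
  assumes "adjacent i j"
  shows "set (inversions [j, i, j]) = set (inversions [i, j, i])"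
    and "inversion_order [i, j, i] \<inter> disjoint_pairs = {}"
  using assms by (auto simp: adjacent_def inversions_braid_factors disjoint_pairs_def simp del: inversions.simps)

lemma comm_factor_inversions:
  assumes "distant i j"
  shows "set (inversions [j, i]) = set (inversions [i, j])"
    and "inversion_order [i, j] \<inter> - disjoint_pairs = {}"
proof -
  have "inversions [i, j] = [adj_pair i, adj_pair j]" "inversions [j, i] = [adj_pair j, adj_pair i]"
    by (simp_all only: inversions.simps list.map adj_transp_image_distant assms distant_sym)
  then show "set (inversions [j, i]) = set (inversions [i, j])"
    and "inversion_order [i, j] \<inter> - disjoint_pairs = {}"
    using adj_pairs_in_disjoint_pairs[OF assms] by auto
qed

lemma braid_move_inversions:
  assumes "braid_move u v"
  shows "set (inversions v) = set (inversions u) \<and>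
    inversion_order v \<inter> disjoint_pairs = inversion_order u \<inter> disjoint_pairs"
proof -
  obtain x i j y where ij: "adjacent i j" and uv: "u = x @ [i, j, i] @ y" "v = x @ [j, i, j] @ y"
    using assms unfolding braid_move_iff by blast
  note ji = adjacent_sym[OF ij]
  have "inversion_order [j, i, j] \<inter> disjoint_pairs = inversion_order [i, j, i] \<inter> disjoint_pairs"
    using braid_factor_inversions(2)[OF ij] braid_factor_inversions(2)[OF ji] by simp
  from inversions_replace_factor[OF word_prod_braid[OF ji] braid_factor_inversions(1)[OF ij] this
      image_in_disjoint_pairs_iff[OF inj_word_prod]]
  show ?thesis unfolding uv by simp
qed

lemma comm_move_inversions:
  assumes "comm_move u v"
  shows "set (inversions v) = set (inversions u) \<and>
    inversion_order v \<inter> - disjoint_pairs = inversion_order u \<inter> - disjoint_pairs"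
proof -
  obtain x i j y where ij: "distant i j" and uv: "u = x @ [i, j] @ y" "v = x @ [j, i] @ y"
    using assms unfolding comm_move_iff by blast
  note ji = distant_sym[OF ij]
  have "inversion_order [j, i] \<inter> - disjoint_pairs = inversion_order [i, j] \<inter> - disjoint_pairs"
    using comm_factor_inversions(2)[OF ij] comm_factor_inversions(2)[OF ji] by simp
  moreover have "(word_prod x ` s, word_prod x ` t) \<in> - disjoint_pairs \<longleftrightarrow> (s, t) \<in> - disjoint_pairs"
    for s t
    using image_in_disjoint_pairs_iff[OF inj_word_prod] by simp
  ultimately show ?thesis
    unfolding uv
    using inversions_replace_factor[OF word_prod_comm[OF ji] comm_factor_inversions(1)[OF ij]]
    by simp
qed

lemma braid_rtranclp_inversions:
  "braid_move\<^sup>*\<^sup>* u v \<Longrightarrow> set (inversions v) = set (inversions u) \<and>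
    inversion_order v \<inter> disjoint_pairs = inversion_order u \<inter> disjoint_pairs"
  by (induction rule: rtranclp_induct) (simp, metis braid_move_inversions)

lemma comm_rtranclp_inversions:
  "comm_move\<^sup>*\<^sup>* u v \<Longrightarrow> set (inversions v) = set (inversions u) \<and>
    inversion_order v \<inter> - disjoint_pairs = inversion_order u \<inter> - disjoint_pairs"
  by (induction rule: rtranclp_induct) (simp, metis comm_move_inversions)

lemma braid_and_comm_equivalent_eq:
  assumes "u \<in> reduced_words n w" "v \<in> reduced_words n w"
    and "braid_move\<^sup>*\<^sup>* u v" "comm_move\<^sup>*\<^sup>* u v"
  shows "u = v"
proof -
  have "set (inversions u) = set (inversions v)" "inversion_order u = inversion_order v"
    using braid_rtranclp_inversions[OF assms(3)] comm_rtranclp_inversions[OF assms(4)] by blast+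
  then have "inversions u = inversions v"
    using list_eq_if_before_pairs_eq distinct_inversions assms(1,2) by blast
  then show ?thesis by (rule inversions_inject)
qed

lemma inversion_order_factor:
  assumes "(s, t) \<in> inversion_order m"
  shows "(word_prod x ` s, word_prod x ` t) \<in> inversion_order (x @ m @ y)"
proof -
  have "(word_prod x ` s, word_prod x ` t) \<in> before_pairs (map ((`) (word_prod x)) (inversions m))"
    unfolding before_pairs_map using assms by (rule rev_image_eqI) simp
  then show ?thesis
    unfolding inversions_factor before_pairs_append by blast
qed

lemma mixed_inversion_order_subset:
  "braid_move\<^sup>*\<^sup>* u z \<Longrightarrow> comm_move\<^sup>*\<^sup>* v z \<Longrightarrow>
    inversion_order u \<inter> disjoint_pairs \<union> (inversion_order v \<inter> - disjoint_pairs) \<subseteq> inversion_order z"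
  using braid_rtranclp_inversions comm_rtranclp_inversions by blast

lemma no_mixed_inversion_cycle:
  assumes "z \<in> reduced_words n w" "braid_move\<^sup>*\<^sup>* u z" "comm_move\<^sup>*\<^sup>* v z"
    and "{(p, q), (q, r), (r, p)} \<subseteq> inversion_order u \<inter> disjoint_pairs \<union> (inversion_order v \<inter> - disjoint_pairs)"
  shows False
proof -
  have "{(p, q), (q, r), (r, p)} \<subseteq> inversion_order z"
    using assms(4) mixed_inversion_order_subset[OF assms(2,3)] by (rule subset_trans)
  then show False
    using before_pairs_no_3cycle[OF distinct_inversions[OF assms(1)], of p q r] by simp
qed

text \<open>Write p_k for adj_pair k and q = s_c(p_j).  The inversions p_i, p_c, q (transported by
  the prefix x) would be ordered cyclically in z: p_i before p_c as in the first word (they are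
  disjoint), q before p_i as in the second word (they overlap), and p_c before q as in both.\<close>
lemma no_common_word_braid_after_commuter:
  assumes ci: "distant c i" and ij: "adjacent i j" and z: "z \<in> reduced_words n w"
    and "braid_move\<^sup>*\<^sup>* (x @ [i, c, j, i] @ y) z" "comm_move\<^sup>*\<^sup>* (x @ [c, j, i, j] @ y) z"
  shows False
proof -
  define X where "X = (`) (word_prod x)"
  define q where "q = adj_transp c ` adj_pair j"
  note ic = distant_sym[OF ci]
  have "adj_transp i ` adj_transp c ` adj_transp j ` adj_pair i = q"
    by (simp only: q_def adj_transp_image_comm[OF ic] adj_transp_image_adjacent[OF ij])
  then have u: "inversions [i, c, j, i] = [adj_pair i, adj_pair c, adj_transp i ` q, q]"
    by (simp only: inversions.simps list.map adj_transp_image_distant[OF ic] q_def[symmetric])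
  have v: "inversions [c, j, i, j] = [adj_pair c, q, adj_transp c ` adj_transp j ` adj_pair i, adj_pair i]"
    by (simp only: inversions.simps list.map q_def[symmetric] adj_transp_image_distant[OF ci]
        adj_transp_image_adjacent[OF adjacent_sym[OF ij]])
  have "(q, adj_pair i) \<notin> disjoint_pairs"
    using adj_pairs_notin_disjoint_pairs[OF adjacent_sym[OF ij]]
      image_in_disjoint_pairs_iff[OF inj_adj_transp, of c "adj_pair j" "adj_pair i"]
    by (simp only: q_def adj_transp_image_distant[OF ci] not_False_eq_True)
  then have "(X q, X (adj_pair i)) \<notin> disjoint_pairs"
    using image_in_disjoint_pairs_iff[OF inj_word_prod] unfolding X_def by blast
  moreover have "(X (adj_pair i), X (adj_pair c)) \<in> disjoint_pairs"
    using adj_pairs_in_disjoint_pairs[OF ic] image_in_disjoint_pairs_iff[OF inj_word_prod]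
    unfolding X_def by blast
  moreover have "(X (adj_pair i), X (adj_pair c)) \<in> inversion_order (x @ [i, c, j, i] @ y)"
    "(X (adj_pair c), X q) \<in> inversion_order (x @ [i, c, j, i] @ y)"
    "(X (adj_pair c), X q) \<in> inversion_order (x @ [c, j, i, j] @ y)"
    "(X q, X (adj_pair i)) \<in> inversion_order (x @ [c, j, i, j] @ y)"
    unfolding X_def by (intro inversion_order_factor, unfold u v, rule before_pairs_4)+
  ultimately show False
    using no_mixed_inversion_cycle[OF z assms(4,5), of "X (adj_pair i)" "X (adj_pair c)" "X q"]
    by blast
qed

lemma no_common_word_braid_before_commuter:
  assumes ci: "distant c i" and ij: "adjacent i j" and z: "z \<in> reduced_words n w"
    and "braid_move\<^sup>*\<^sup>* (x @ [i, j, c, i] @ y) z" "comm_move\<^sup>*\<^sup>* (x @ [j, i, j, c] @ y) z"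
  shows False
proof -
  define X where "X = (`) (word_prod x)"
  define p where "p = adj_transp i ` adj_transp j ` adj_pair c"
  have u: "inversions [i, j, c, i] = [adj_pair i, adj_transp i ` adj_pair j, p, adj_pair j]"
    by (simp only: inversions.simps list.map p_def[symmetric] adj_transp_image_distant[OF ci]
        adj_transp_image_adjacent[OF ij])
  have "adj_transp j ` p = p"
    by (simp only: p_def adj_transp_image_braid[OF ij] adj_transp_image_distant[OF distant_sym[OF ci]])
  then have v: "inversions [j, i, j, c] = [adj_pair j, adj_transp j ` adj_pair i, adj_pair i, p]"
    by (simp only: inversions.simps list.map p_def[symmetric]
        adj_transp_image_adjacent[OF adjacent_sym[OF ij]])
  have "(adj_transp i ` adj_transp j ` adj_pair c, adj_transp i ` adj_transp j ` adj_pair i) \<in> disjoint_pairs"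
    using adj_pairs_in_disjoint_pairs[OF ci] image_in_disjoint_pairs_iff[OF inj_adj_transp]
    by blast
  then have "(p, adj_pair j) \<in> disjoint_pairs"
    by (simp only: p_def adj_transp_image_adjacent[OF ij])
  then have "(X p, X (adj_pair j)) \<in> disjoint_pairs"
    using image_in_disjoint_pairs_iff[OF inj_word_prod] unfolding X_def by blast
  moreover have "(X (adj_pair j), X (adj_pair i)) \<notin> disjoint_pairs"
    using adj_pairs_notin_disjoint_pairs[OF adjacent_sym[OF ij]] image_in_disjoint_pairs_iff[OF inj_word_prod]
    unfolding X_def by blast
  moreover have "(X p, X (adj_pair j)) \<in> inversion_order (x @ [i, j, c, i] @ y)"
    "(X (adj_pair i), X p) \<in> inversion_order (x @ [i, j, c, i] @ y)"
    "(X (adj_pair j), X (adj_pair i)) \<in> inversion_order (x @ [j, i, j, c] @ y)"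
    "(X (adj_pair i), X p) \<in> inversion_order (x @ [j, i, j, c] @ y)"
    unfolding X_def by (intro inversion_order_factor, unfold u v, rule before_pairs_4)+
  ultimately show False
    using no_mixed_inversion_cycle[OF z assms(4,5), of "X p" "X (adj_pair j)" "X (adj_pair i)"]
    by blast
qed

section \<open>A braid factor next to a commuting letter\<close>

lemma list_cases_up_to_3:
  obtains "xs = []" | p where "xs = [p]" | p q where "xs = [p, q]" | p q r zs where "xs = p # q # r # zs"
  by (metis list.exhaust)

lemma distant_pair_braid_factor_positions:
  assumes "x1 @ [a, b] @ y1 = x2 @ [i, j, i] @ y2" "distant a b" "adjacent i j"
  shows "(\<exists>mid. x2 = x1 @ [a, b] @ mid) \<or> (x2 = x1 @ [a] \<and> b = i) \<or>
    (x1 = x2 @ [i, j] \<and> a = i) \<or> (\<exists>mid. x1 = x2 @ [i, j, i] @ mid)"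
proof -
  have ab: "\<not> (a = i \<and> b = j)" "\<not> (a = j \<and> b = i)"
    using assms(2,3) not_distant_and_adjacent adjacent_sym by blast+
  obtain us where
    "x1 = x2 @ us \<and> us @ [a, b] @ y1 = [i, j, i] @ y2 \<or> x1 @ us = x2 \<and> [a, b] @ y1 = us @ [i, j, i] @ y2"
    using append_eq_append_conv2[THEN iffD1, OF assms(1)] by blast
  then show ?thesis
  proof (elim disjE conjE)
    assume "x1 = x2 @ us" "us @ [a, b] @ y1 = [i, j, i] @ y2"
    with ab show ?thesis by (cases us rule: list_cases_up_to_3) simp_all
  next
    assume "x1 @ us = x2" "[a, b] @ y1 = us @ [i, j, i] @ y2"
    with ab show ?thesis by (cases us rule: list_cases_up_to_3) (simp_all, blast+)
  qed
qed

definition braid_after_commuter :: "nat list set \<Rightarrow> bool" where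
  "braid_after_commuter S \<longleftrightarrow>
     (\<exists>x c i j y. x @ [c, i, j, i] @ y \<in> S \<and> distant c i \<and> adjacent i j)"

definition braid_before_commuter :: "nat list set \<Rightarrow> bool" where
  "braid_before_commuter S \<longleftrightarrow>
     (\<exists>x c i j y. x @ [i, j, i, c] @ y \<in> S \<and> distant c i \<and> adjacent i j)"

lemma braid_after_commuterI:
  "x @ [c, i, j, i] @ y \<in> S \<Longrightarrow> distant c i \<Longrightarrow> adjacent i j \<Longrightarrow> braid_after_commuter S"
  unfolding braid_after_commuter_def by blast

lemma braid_before_commuterI:
  "x @ [i, j, i, c] @ y \<in> S \<Longrightarrow> distant c i \<Longrightarrow> adjacent i j \<Longrightarrow> braid_before_commuter S"
  unfolding braid_before_commuter_def by blast

lemma in_rev_image_iff: "u \<in> rev ` S \<longleftrightarrow> rev u \<in> S"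
  by (metis image_iff rev_rev_ident)

lemma braid_before_commuter_if_rev:
  "braid_after_commuter (rev ` S) \<Longrightarrow> braid_before_commuter S"
  unfolding braid_after_commuter_def braid_before_commuter_def in_rev_image_iff
  by fastforce

locale commutation_closed =
  fixes S :: "nat list set"
  assumes swap_distant: "x @ [a, b] @ y \<in> S \<Longrightarrow> distant a b \<Longrightarrow> x @ [b, a] @ y \<in> S"
    and square_free: "x @ [a, a] @ y \<notin> S"
begin

lemma adjacent_if_not_distant_factor:
  "x @ [a, b] @ y \<in> S \<Longrightarrow> \<not> distant a b \<Longrightarrow> adjacent a b"
  using square_free adjacent_if_not_distant by blast

lemma shift_distant_pair:
  assumes "x @ [a, b, e] @ t \<in> S" "distant a b"
  shows "(\<exists>x' c. x' @ [c, e] @ t \<in> S \<and> distant c e) \<or> (adjacent a e \<and> adjacent b e)"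
proof (cases "distant b e")
  case True
  with assms(1) show ?thesis by (intro disjI1 exI[of _ "x @ [a]"] exI[of _ b]) simp
next
  case False
  with assms(1) have be: "adjacent b e"
    using adjacent_if_not_distant_factor[of "x @ [a]" b e t] by simp
  have swapped: "x @ [b, a, e] @ t \<in> S"
    using swap_distant[of x a b "e # t"] assms by simp
  show ?thesis
  proof (cases "distant a e")
    case True
    with swapped show ?thesis by (intro disjI1 exI[of _ "x @ [b]"] exI[of _ a]) simp
  next
    case False
    with swapped be show ?thesis
      using adjacent_if_not_distant_factor[of "x @ [b]" a e t] by simp
  qed
qed

lemma braid_after_commuter_if_common_neighbour:
  assumes "x @ [a, b, e, f] @ t \<in> S" "distant a b" "adjacent a e" "adjacent b e" "\<not> distant e f"
  shows "braid_after_commuter S"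
proof -
  have "adjacent e f"
    using adjacent_if_not_distant_factor[of "x @ [a, b]" e f t] assms(1,5) by simp
  then consider "f = b" | "f = a"
    using common_neighbour_of_distant assms(2-4) by blast
  then show ?thesis
  proof cases
    case 1
    with assms(1-4) show ?thesis using braid_after_commuterI[of x a b e t] by simp
  next
    case 2
    have "x @ [b, a, e, a] @ t \<in> S"
      using swap_distant[of x a b "[e, f] @ t"] assms(1,2) 2 by simp
    with assms(2,3) show ?thesis
      using braid_after_commuterI[of x b a e t] distant_sym by simp
  qed
qed

text \<open>Slide the commuting pair to the right: it only gets stuck at a common neighbour of its
  two letters, and there the braid pattern appears.\<close>
lemma braid_after_commuter_if_distant_pair_before_braid:
  "x @ [a, b] @ mid @ [i, j, i] @ y \<in> S \<Longrightarrow> distant a b \<Longrightarrow> adjacent i j \<Longrightarrow>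
    braid_after_commuter S"
proof (induction "length mid" arbitrary: mid x a b rule: less_induct)
  case less
  show ?case
  proof (cases mid)
    case Nil
    with less.prems(1) have w: "x @ [a, b, i] @ [j, i] @ y \<in> S" by simp
    from shift_distant_pair[OF w less.prems(2)] show ?thesis
    proof
      assume "\<exists>x' c. x' @ [c, i] @ [j, i] @ y \<in> S \<and> distant c i"
      with less.prems(3) show ?thesis using braid_after_commuterI by fastforce
    next
      assume "adjacent a i \<and> adjacent b i"
      with w less.prems show ?thesis
        using braid_after_commuter_if_common_neighbour[of x a b i j "i # y"] not_distant_and_adjacent by auto
    qed
  next
    case (Cons e mid')
    with less.prems(1) have w: "x @ [a, b, e] @ mid' @ [i, j, i] @ y \<in> S" by simp
    from shift_distant_pair[OF w less.prems(2)] show ?thesis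
    proof
      assume "\<exists>x' c. x' @ [c, e] @ mid' @ [i, j, i] @ y \<in> S \<and> distant c e"
      with less.hyps[of mid'] less.prems(3) Cons show ?thesis by auto
    next
      assume common_neighbour: "adjacent a e \<and> adjacent b e"
      obtain f t where ft: "mid' @ [i, j, i] @ y = f # t" by (cases mid') auto
      show ?thesis
      proof (cases "distant e f")
        case False
        with w ft common_neighbour less.prems(2) show ?thesis
          using braid_after_commuter_if_common_neighbour[of x a b e f t] by simp
      next
        case True
        show ?thesis
        proof (cases mid')
          case Nil
          with ft w True less.prems(3) show ?thesis
            using braid_after_commuterI[of "x @ [a, b]" e i j y] by simp
        next
          case (Cons f' mid'')
          with ft w have "(x @ [a, b]) @ [e, f] @ mid'' @ [i, j, i] @ y \<in> S" by simp
          then show ?thesis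
            using less.hyps[of mid'' "x @ [a, b]" e f] True less.prems(3) Cons \<open>mid = e # mid'\<close>
            by simp
        qed
      qed
    qed
  qed
qed

lemma commutation_closed_rev: "commutation_closed (rev ` S)"
proof
  fix x a b y
  assume "x @ [a, b] @ y \<in> rev ` S" "distant a b"
  then show "x @ [b, a] @ y \<in> rev ` S"
    using swap_distant[of "rev y" b a "rev x"] distant_sym by (simp add: in_rev_image_iff)
next
  fix x a y
  show "x @ [a, a] @ y \<notin> rev ` S"
    using square_free[of "rev y" a "rev x"] by (simp add: in_rev_image_iff)
qed

lemma braid_before_commuter_if_distant_pair_after_braid:
  assumes "x @ [i, j, i] @ mid @ [a, b] @ y \<in> S" "distant a b" "adjacent i j"
  shows "braid_before_commuter S"
proof -
  interpret rev_S: commutation_closed "rev ` S" by (rule commutation_closed_rev)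
  have "rev y @ [b, a] @ rev mid @ [i, j, i] @ rev x \<in> rev ` S"
    using assms(1) by (simp add: in_rev_image_iff)
  then have "braid_after_commuter (rev ` S)"
    using rev_S.braid_after_commuter_if_distant_pair_before_braid distant_sym assms(2,3) by blast
  then show ?thesis by (rule braid_before_commuter_if_rev)
qed

lemma braid_commuter_if_both_moves:
  assumes "u \<in> S" "braid_move u v" "comm_move u v'"
  shows "braid_after_commuter S \<or> braid_before_commuter S"
proof -
  obtain x2 i j y2 where ij: "adjacent i j" and u2: "u = x2 @ [i, j, i] @ y2"
    using assms(2) unfolding braid_move_iff by blast
  obtain x1 a b y1 where ab: "distant a b" and u1: "u = x1 @ [a, b] @ y1"
    using assms(3) unfolding comm_move_iff by blast
  from distant_pair_braid_factor_positions[OF u1[symmetric, THEN trans, OF u2] ab ij] show ?thesis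
  proof (elim disjE exE conjE)
    fix mid
    assume "x2 = x1 @ [a, b] @ mid"
    with assms(1) u2 ab ij show ?thesis
      using braid_after_commuter_if_distant_pair_before_braid[of x1 a b mid i j y2] by simp
  next
    assume "x2 = x1 @ [a]" "b = i"
    with assms(1) u2 ab ij show ?thesis
      using braid_after_commuterI[of x1 a i j y2] by simp
  next
    assume "x1 = x2 @ [i, j]" "a = i"
    with assms(1) u1 ab ij show ?thesis
      using braid_before_commuterI[of x2 i j b y1] distant_sym by simp
  next
    fix mid
    assume "x1 = x2 @ [i, j, i] @ mid"
    with assms(1) u1 ab ij show ?thesis
      using braid_before_commuter_if_distant_pair_after_braid[of x2 i j mid a b y1] by simp
  qed
qed

end

interpretation reduced_words: commutation_closed "reduced_words n w"
proof
  show "x @ [b, a] @ y \<in> reduced_words n w" if "x @ [a, b] @ y \<in> reduced_words n w" "distant a b"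
    for x a b y
    using reduced_words_comm_move that comm_move_iff by blast
qed (rule reduced_words_no_square)

lemma disjoint_move_classes_if_braid_commuter:
  assumes "braid_after_commuter (reduced_words n w) \<or> braid_before_commuter (reduced_words n w)"
  shows "\<exists>u\<in>reduced_words n w. \<exists>v\<in>reduced_words n w.
    \<not> (\<exists>z\<in>reduced_words n w. braid_move\<^sup>*\<^sup>* u z \<and> comm_move\<^sup>*\<^sup>* v z)"
  using assms
proof
  assume "braid_after_commuter (reduced_words n w)"
  then obtain x c i j y where w: "x @ [c, i, j, i] @ y \<in> reduced_words n w"
    and ci: "distant c i" and ij: "adjacent i j"
    unfolding braid_after_commuter_def by blast
  have "x @ [i, c, j, i] @ y \<in> reduced_words n w"
    using reduced_words.swap_distant[of x c i "[j, i] @ y"] w ci by simp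
  moreover have "x @ [c, j, i, j] @ y \<in> reduced_words n w"
    using reduced_words_braid_move[OF braid_moveI[OF ij, of "x @ [c]" y]] w by simp
  ultimately show ?thesis
    using no_common_word_braid_after_commuter[OF ci ij] by blast
next
  assume "braid_before_commuter (reduced_words n w)"
  then obtain x c i j y where w: "x @ [i, j, i, c] @ y \<in> reduced_words n w"
    and ci: "distant c i" and ij: "adjacent i j"
    unfolding braid_before_commuter_def by blast
  have "x @ [i, j, c, i] @ y \<in> reduced_words n w"
    using reduced_words.swap_distant[of "x @ [i, j]" i c y] w distant_sym[OF ci] by simp
  moreover have "x @ [j, i, j, c] @ y \<in> reduced_words n w"
    using reduced_words_braid_move[OF braid_moveI[OF ij, of x "c # y"]] w by simp
  ultimately show ?thesis
    using no_common_word_braid_before_commuter[OF ci ij] by blast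
qed

section \<open>Counting classes\<close>

lemma class_eq_if_mem:
  assumes "equiv A r" "X \<in> A // r" "z \<in> X"
  shows "X = r `` {z}"
  using assms by (metis Image_singleton_iff equiv_class_eq quotientE)

lemma card_eq_mult_card_quotients_iff:
  assumes fin: "finite A" and r: "equiv A r" and s: "equiv A s" and rs: "r \<inter> s \<subseteq> Id"
  shows "card A = card (A // r) * card (A // s) \<longleftrightarrow> (\<forall>X\<in>A // r. \<forall>Y\<in>A // s. X \<inter> Y \<noteq> {})"
proof -
  define f where "f x = (r `` {x}, s `` {x})" for x
  let ?meeting = "{(X, Y) \<in> A // r \<times> A // s. X \<inter> Y \<noteq> {}}"
  have "inj_on f A"
  proof (rule inj_onI)
    fix x y assume "x \<in> A" "y \<in> A" "f x = f y"
    then have "(x, y) \<in> r \<inter> s"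
      using eq_equiv_class_iff[OF r] eq_equiv_class_iff[OF s] by (auto simp: f_def)
    with rs show "x = y" by blast
  qed
  moreover have "f ` A = ?meeting"
  proof
    show "f ` A \<subseteq> ?meeting"
      using equiv_class_self[OF r] equiv_class_self[OF s] by (auto simp: f_def quotientI)
    show "?meeting \<subseteq> f ` A"
    proof clarify
      fix X Y assume "X \<in> A // r" "Y \<in> A // s" "X \<inter> Y \<noteq> {}"
      then obtain z where XY: "X \<in> A // r" "Y \<in> A // s" "z \<in> X" "z \<in> Y" by blast
      then have "z \<in> A" using in_quotient_imp_subset[OF r] by blast
      moreover have "(X, Y) = f z"
        using class_eq_if_mem[OF r XY(1,3)] class_eq_if_mem[OF s XY(2,4)] by (simp add: f_def)
      ultimately show "(X, Y) \<in> f ` A" by (rule rev_image_eqI)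
    qed
  qed
  ultimately have "card A = card ?meeting"
    using card_image by fastforce
  moreover have "finite (A // r \<times> A // s)"
    using finite_quotient[OF fin] r s by (simp add: equiv_type)
  ultimately have "card A = card (A // r \<times> A // s) \<longleftrightarrow> ?meeting = A // r \<times> A // s"
    using card_subset_eq[of "A // r \<times> A // s" ?meeting] by auto
  moreover have "?meeting = A // r \<times> A // s \<longleftrightarrow> (\<forall>X\<in>A // r. \<forall>Y\<in>A // s. X \<inter> Y \<noteq> {})"
    by auto
  ultimately show ?thesis by (simp only: card_cartesian_product)
qed

lemma classes_meet_if_card_quotient_eq_1:
  assumes "equiv A r" "equiv A s" "card (A // r) = 1" "X \<in> A // r" "Y \<in> A // s"
  shows "X \<inter> Y \<noteq> {}"
proof -
  have "X = A"
    using assms(1,3,4) Union_quotient[OF assms(1)] by (auto simp: card_1_singleton_iff)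
  then show ?thesis
    using in_quotient_imp_subset[OF assms(2,5)] in_quotient_imp_non_empty[OF assms(2,5)] by blast
qed

lemma class_ne_singleton_if_classes_meet:
  assumes r: "equiv A r" and s: "equiv A s" and meet: "\<forall>X\<in>A // r. \<forall>Y\<in>A // s. X \<inter> Y \<noteq> {}"
    and "card (A // s) \<noteq> 1" "u \<in> A"
  shows "r `` {u} \<noteq> {u}"
proof
  assume "r `` {u} = {u}"
  then have u: "{u} \<in> A // r" using quotientI[OF \<open>u \<in> A\<close>, of r] by simp
  have "Y = s `` {u}" if "Y \<in> A // s" for Y
  proof (rule class_eq_if_mem[OF s that])
    show "u \<in> Y" using meet u that by blast
  qed
  then have "A // s = {s `` {u}}"
    using quotientI[OF \<open>u \<in> A\<close>, of s] by blast
  with \<open>card (A // s) \<noteq> 1\<close> show False by simp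
qed

definition move_equiv :: "('a \<Rightarrow> 'a \<Rightarrow> bool) \<Rightarrow> 'a set \<Rightarrow> 'a rel" where
  "move_equiv mv R = {(x, y). x \<in> R \<and> y \<in> R \<and> mv\<^sup>*\<^sup>* x y}"

lemma move_classes_eq_quotient: "move_classes mv R = R // move_equiv mv R"
  by (simp add: move_classes_def move_equiv_def)

lemma equiv_move_equiv:
  assumes "symp mv"
  shows "equiv R (move_equiv mv R)"
proof (rule equivI)
  show "refl_on R (move_equiv mv R)"
    by (auto simp: refl_on_def move_equiv_def)
  show "sym (move_equiv mv R)"
    using symp_rtranclp[OF assms] by (auto simp: sym_def move_equiv_def dest: sympD)
  show "trans (move_equiv mv R)"
    by (auto simp: trans_def move_equiv_def)
qed (auto simp: move_equiv_def)

lemma move_equiv_class_if_no_move: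
  "u \<in> R \<Longrightarrow> \<nexists>v. mv u v \<Longrightarrow> move_equiv mv R `` {u} = {u}"
  by (auto simp: move_equiv_def elim: converse_rtranclpE)

lemma equiv_move_equiv_braid: "equiv (reduced_words n w) (move_equiv braid_move (reduced_words n w))"
  by (rule equiv_move_equiv) (auto intro: sympI braid_move_sym)

lemma equiv_move_equiv_comm: "equiv (reduced_words n w) (move_equiv comm_move (reduced_words n w))"
  by (rule equiv_move_equiv) (auto intro: sympI comm_move_sym)

lemma move_equiv_braid_Int_comm_subset_Id:
  "move_equiv braid_move (reduced_words n w) \<inter> move_equiv comm_move (reduced_words n w) \<subseteq> Id"
  using braid_and_comm_equivalent_eq by (auto simp: move_equiv_def)

lemma card_move_classes_eq_1_if_classes_meet:
  assumes "w permutes {1..n}"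
    and meet: "\<forall>X\<in>braid_classes n w. \<forall>Y\<in>comm_classes n w. X \<inter> Y \<noteq> {}"
  shows "card (braid_classes n w) = 1 \<or> card (comm_classes n w) = 1"
proof (rule ccontr)
  let ?R = "reduced_words n w"
  assume "\<not> ?thesis"
  moreover obtain u where u: "u \<in> ?R"
    using reduced_words_nonempty[OF assms(1)] by blast
  ultimately have "move_equiv braid_move ?R `` {u} \<noteq> {u}" "move_equiv comm_move ?R `` {u} \<noteq> {u}"
    using class_ne_singleton_if_classes_meet[OF equiv_move_equiv_braid equiv_move_equiv_comm]
      class_ne_singleton_if_classes_meet[OF equiv_move_equiv_comm equiv_move_equiv_braid] meet
    unfolding braid_classes_def comm_classes_def move_classes_eq_quotient by (metis Int_commute)+
  then obtain v v' where "braid_move u v" "comm_move u v'"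
    using move_equiv_class_if_no_move[OF u] by metis
  then obtain u' v where uv: "u' \<in> ?R" "v \<in> ?R"
    and disjoint: "\<not> (\<exists>z\<in>?R. braid_move\<^sup>*\<^sup>* u' z \<and> comm_move\<^sup>*\<^sup>* v z)"
    using disjoint_move_classes_if_braid_commuter reduced_words.braid_commuter_if_both_moves[OF u]
    by blast
  have "move_equiv braid_move ?R `` {u'} \<inter> move_equiv comm_move ?R `` {v} \<noteq> {}"
    using meet uv unfolding braid_classes_def comm_classes_def move_classes_eq_quotient
    by (simp add: quotientI)
  with disjoint show False by (auto simp: move_equiv_def)
qed

theorem proposition4p8:
  fixes n :: nat and w :: "nat \<Rightarrow> nat"
  assumes "w permutes {1..n}"
  shows "card (reduced_words n w) = card (braid_classes n w) * card (comm_classes n w)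
     \<longleftrightarrow> card (braid_classes n w) = 1 \<or> card (comm_classes n w) = 1"
proof -
  have "card (reduced_words n w) = card (braid_classes n w) * card (comm_classes n w) \<longleftrightarrow>
      (\<forall>X\<in>braid_classes n w. \<forall>Y\<in>comm_classes n w. X \<inter> Y \<noteq> {})"
    unfolding braid_classes_def comm_classes_def move_classes_eq_quotient
    by (rule card_eq_mult_card_quotients_iff[OF finite_reduced_words equiv_move_equiv_braid
          equiv_move_equiv_comm move_equiv_braid_Int_comm_subset_Id])
  also have "\<dots> \<longleftrightarrow> card (braid_classes n w) = 1 \<or> card (comm_classes n w) = 1"
    using card_move_classes_eq_1_if_classes_meet[OF assms]
      classes_meet_if_card_quotient_eq_1[OF equiv_move_equiv_braid equiv_move_equiv_comm]
      classes_meet_if_card_quotient_eq_1[OF equiv_move_equiv_comm equiv_move_equiv_braid]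
    unfolding braid_classes_def comm_classes_def move_classes_eq_quotient
    by (metis Int_commute)
  finally show ?thesis .
qed

end
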